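(* Let $\lambda,\mu,\lambda',\mu',k,k'\in\mathbb{C}$, $p,p'\in\mathbb{Z}_2$ and $l,l'\in\mathbb{Z}^+$, and write $\delta=\mu-\lambda$, $\delta'=\mu'-\lambda'$. If the $\mathcal{K}$-modules $\mathrm{SQ}^{k,p,l}_{\lambda,\mu}$ and $\mathrm{SQ}^{k',p',l'}_{\lambda',\mu'}$ are equivalent, then $l=l'$, $\delta-k=\delta'-k'$, and the parity of the equivalence is $p-p'$ (even if $p=p'$, odd otherwise). There are no equivalences of mixed parity between such modules.
   Context: Work over $\mathbb{C}$ on the superline $\mathbb{R}^{1|1}$ in the polynomial category. Let $\mathbb{C}[x,\xi]$ be the polynomial superalgebra with even coordinate $x$ and odd coordinate $\xi$ ($\xi^2=0$), and set $D=\partial_\xi+\xi\partial_x$, $\bar D=\partial_\xi-\xi\partial_x$. For $F\in\mathbb{C}[x,\xi]$ put $X_F=F\partial_x+\tfrac12 D(F)\bar D$; the Lie superalgebra of contact vector fields is $\mathcal{K}=\{X_F:F\in\mathbb{C}[x,\xi]\}$. For a superspace $V$, $V^\Pi$ is $V$ with parity reversed, and $V^{p\Pi}$ is $V$ if $p$ is even and $V^\Pi$ if $p$ is odd. For $\nu\in\mathbb{C}$ the tensor density module is $\mathcal{F}_\nu=\alpha^\nu\mathbb{C}[x,\xi]$ ($\alpha^\nu$ a formal even symbol) with action $L_\nu(X_F)(\alpha^\nu G)=\alpha^\nu(X_F(G)+\nu\,\partial_x(F)\,G)$. For $\lambda,\mu\in\mathbb{C}$ write $\delta=\mu-\lambda$.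 For $z\in\mathbb{C}$ define formal symbols $\bar D^z_0=e^{i\pi z/2}\partial_x^{z/2}$ (even) and $\bar D^z_1=e^{i\pi(z-1)/2}\partial_x^{(z-1)/2}\bar D$ (odd). For $k\in\mathbb{C}$, $p\in\mathbb{Z}_2$, the space of pseudodifferential operators is $\Psi^{k,p}_{\lambda,\mu}=\{\alpha^{\delta}\sum_{j\in\mathbb{N}}T_{2k-j}\bar D^{2k-j}_{p+(j\bmod 2)}:T_{2k-j}\in\mathbb{C}[x,\xi]\}$ (formal series). Composition is defined by $\bar D^{z'}_{p'}\circ\bar D^z_p=\bar D^{z+z'}_{p+p'}$, $[\bar D,\partial_x^z]=0$ and the generalized Leibniz rule $\partial_x^z\circ F=\sum_{j\in\mathbb{N}}\binom{z}{j}\partial_x^j(F)\circ\partial_x^{z-j}$, and $\mathcal{K}$ acts by $L_{\lambda,\mu}(X)(T)=L_\mu(X)\circ T-(-1)^{|X||T|}T\circ L_\lambda(X)$; the spaces $\Psi^{k-1/2,p+1}_{\lambda,\mu}\subset\Psi^{k,p}_{\lambda,\mu}$ are $\mathcal{K}$-submodules. For $l\in\mathbb{Z}^+$, $\mathrm{SQ}^{k,p,l}_{\lambda,\mu}=\Psi^{k,p}_{\lambda,\mu}/\Psi^{k-l/2,\,p+l}_{\lambda,\mu}$, a $\mathcal{K}$-module with successive composition factors $\mathcal{F}^{p\Pi}_{\delta-k},\mathcal{F}^{(p+1)\Pi}_{\delta-k+1/2},\dots,\mathcal{F}^{(p+l-1)\Pi}_{\delta-k+(l-1)/2}$. Equivalences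 are $\mathcal{K}$-module isomorphisms, which may be even, odd or of mixed parity. *)

theory Defs
  imports "HOL-Computational_Algebra.Polynomial" "HOL-Library.Z2" "HOL-Library.Product_Plus"
begin

text \<open>An element a(x) + xi b(x) of C[x,xi] is represented by the pair (a, b).
  Its even part is a, its odd part is xi b.\<close>

type_synonym spoly = "complex poly \<times> complex poly"

definition sp_scale :: "complex \<Rightarrow> spoly \<Rightarrow> spoly" where
  "sp_scale c F = (smult c (fst F), smult c (snd F))"

definition sp_mult :: "spoly \<Rightarrow> spoly \<Rightarrow> spoly" where
  "sp_mult F G = (fst F * fst G, fst F * snd G + snd F * fst G)"

definition sp_dx :: "spoly \<Rightarrow> spoly" where
  "sp_dx F = (pderiv (fst F), pderiv (snd F))"

text \<open>D = partial_xi + xi partial_x\<close>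
definition sp_D :: "spoly \<Rightarrow> spoly" where
  "sp_D F = (snd F, pderiv (fst F))"

text \<open>Dbar = partial_xi - xi partial_x\<close>
definition sp_Dbar :: "spoly \<Rightarrow> spoly" where
  "sp_Dbar F = (snd F, - pderiv (fst F))"

text \<open>parity automorphism: F \<mapsto> (-1)^|F| F on homogeneous F\<close>
definition sp_sigma :: "spoly \<Rightarrow> spoly" where
  "sp_sigma F = (fst F, - snd F)"

definition sp_even_part :: "spoly \<Rightarrow> spoly" where
  "sp_even_part F = (fst F, 0)"

definition sp_odd_part :: "spoly \<Rightarrow> spoly" where
  "sp_odd_part F = (0, snd F)"

text \<open>A symbol (z, q, c) stands for the formal series
  sum_n  c n \<circ> Dbar^(z - n)_(q + n).\<close>

type_synonym symb = "complex \<times> bit \<times> (nat \<Rightarrow> spoly)"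

text \<open>Commutation rule: Dbar^z_q \<circ> G = sum_d (comm_coeff d z q G) \<circ> Dbar^(z-d)_(q+d).
  Derived from Dbar^z_0 = e^(i pi z/2) partial_x^(z/2), the generalized Leibniz rule,
  Dbar^z_1 = Dbar^(z-1)_0 \<circ> Dbar and Dbar \<circ> G = Dbar(G) + sigma(G) Dbar.\<close>
definition comm_coeff :: "nat \<Rightarrow> complex \<Rightarrow> bit \<Rightarrow> spoly \<Rightarrow> spoly" where
  "comm_coeff d z q G =
     (if q = 0 then
        (if even d then sp_scale ((-1) ^ (d div 2) * ((z / 2) gchoose (d div 2)))
                                  ((sp_dx ^^ (d div 2)) G)
         else (0, 0))
      else
        (if even d then sp_scale ((-1) ^ (d div 2) * (((z - 1) / 2) gchoose (d div 2)))
                                  ((sp_dx ^^ (d div 2)) (sp_sigma G))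
         else sp_scale ((-1) ^ (d div 2) * (((z - 1) / 2) gchoose (d div 2)))
                                  ((sp_dx ^^ (d div 2)) (sp_Dbar G))))"

text \<open>Composition of symbols, using Dbar^z'_p' \<circ> Dbar^z_p = Dbar^(z+z')_(p+p').\<close>
definition symb_comp :: "symb \<Rightarrow> symb \<Rightarrow> symb" where
  "symb_comp A B =
     (case A of (z0, q0, a) \<Rightarrow> case B of (w0, r0, b) \<Rightarrow>
       (z0 + w0, q0 + r0,
        \<lambda>n. \<Sum>i\<le>n. \<Sum>d\<le>n - i.
              sp_mult (a i) (comm_coeff d (z0 - of_nat i) (q0 + of_nat i) (b (n - i - d)))))"

definition symb_coeff :: "symb \<Rightarrow> nat \<Rightarrow> spoly" where
  "symb_coeff A n = snd (snd A) n"

text \<open>The operator L_nu(X_F) = F partial_x + 1/2 D(F) Dbar + nu F' as a symbol,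
  using partial_x = - Dbar^2_0, Dbar = Dbar^1_1, 1 = Dbar^0_0.\<close>
definition L_symb :: "complex \<Rightarrow> spoly \<Rightarrow> symb" where
  "L_symb nu F = (2, 0, \<lambda>n. if n = 0 then - F
                            else if n = 1 then sp_scale (1/2) (sp_D F)
                            else if n = 2 then sp_scale nu (sp_dx F)
                            else 0)"

text \<open>An element of Psi^{k,p}_{lambda,mu} is alpha^delta sum_j T_j Dbar^(2k-j)_(p+j);
  we store j \<mapsto> T_j.  An element of the quotient SQ^{k,p,l} is represented by its
  canonical representative with T_j = 0 for j \<ge> l.\<close>

definition SQ_carrier :: "nat \<Rightarrow> (nat \<Rightarrow> spoly) set" where
  "SQ_carrier l = {T. \<forall>j\<ge>l. T j = 0}"

text \<open>even / odd homogeneous parts: in T_j Dbar^(2k-j)_(p+j), the even part of T_j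
  has parity p+j, the odd part has parity p+j+1.\<close>
definition SQ_even_part :: "bit \<Rightarrow> (nat \<Rightarrow> spoly) \<Rightarrow> (nat \<Rightarrow> spoly)" where
  "SQ_even_part p T = (\<lambda>j. if p + of_nat j = 0 then sp_even_part (T j) else sp_odd_part (T j))"

definition SQ_odd_part :: "bit \<Rightarrow> (nat \<Rightarrow> spoly) \<Rightarrow> (nat \<Rightarrow> spoly)" where
  "SQ_odd_part p T = (\<lambda>j. if p + of_nat j = 0 then sp_odd_part (T j) else sp_even_part (T j))"

definition SQ_is_even :: "bit \<Rightarrow> (nat \<Rightarrow> spoly) \<Rightarrow> bool" where
  "SQ_is_even p T \<longleftrightarrow> SQ_odd_part p T = (\<lambda>_. 0)"

definition SQ_is_odd :: "bit \<Rightarrow> (nat \<Rightarrow> spoly) \<Rightarrow> bool" where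
  "SQ_is_odd p T \<longleftrightarrow> SQ_even_part p T = (\<lambda>_. 0)"

text \<open>Super-bracket L_mu(X) \<circ> T - (-1)^{|X||T|} T \<circ> L_lambda(X) for homogeneous
  F (parity fo) and T (parity to); coefficients indexed from degree 2k+2.\<close>
definition hom_bracket ::
  "complex \<Rightarrow> complex \<Rightarrow> complex \<Rightarrow> bit \<Rightarrow> spoly \<Rightarrow> bool \<Rightarrow> (nat \<Rightarrow> spoly) \<Rightarrow> bool \<Rightarrow> nat \<Rightarrow> spoly"
  where
  "hom_bracket lam mu k p F fo T to n =
     symb_coeff (symb_comp (L_symb mu F) (2 * k, p, T)) n
     - sp_scale (if fo \<and> to then -1 else 1) (symb_coeff (symb_comp (2 * k, p, T) (L_symb lam F)) n)"

text \<open>The action L_{lambda,mu}(X_F) on SQ^{k,p,l}_{lambda,mu} (extended bilinearly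
  from homogeneous parts; the terms of degree 2k+2, 2k+1 cancel).\<close>
definition SQ_act ::
  "complex \<Rightarrow> complex \<Rightarrow> complex \<Rightarrow> bit \<Rightarrow> nat \<Rightarrow> spoly \<Rightarrow> (nat \<Rightarrow> spoly) \<Rightarrow> (nat \<Rightarrow> spoly)"
  where
  "SQ_act lam mu k p l F T = (\<lambda>j. if j < l then
      hom_bracket lam mu k p (sp_even_part F) False (SQ_even_part p T) False (j + 2)
    + hom_bracket lam mu k p (sp_even_part F) False (SQ_odd_part p T) True (j + 2)
    + hom_bracket lam mu k p (sp_odd_part F) True (SQ_even_part p T) False (j + 2)
    + hom_bracket lam mu k p (sp_odd_part F) True (SQ_odd_part p T) True (j + 2)
    else 0)"

text \<open>A K-module isomorphism SQ^{k,p,l}_{lam,mu} \<rightarrow> SQ^{k',p',l'}_{lam',mu'}: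
  a C-linear bijection commuting with the action of every X_F (no parity
  condition is imposed: it may be even, odd or of mixed parity).\<close>
definition SQ_equivalence ::
  "complex \<Rightarrow> complex \<Rightarrow> complex \<Rightarrow> bit \<Rightarrow> nat \<Rightarrow>
   complex \<Rightarrow> complex \<Rightarrow> complex \<Rightarrow> bit \<Rightarrow> nat \<Rightarrow>
   ((nat \<Rightarrow> spoly) \<Rightarrow> (nat \<Rightarrow> spoly)) \<Rightarrow> bool" where
  "SQ_equivalence lam mu k p l lam' mu' k' p' l' \<Phi> \<longleftrightarrow>
     bij_betw \<Phi> (SQ_carrier l) (SQ_carrier l') \<and>
     (\<forall>c u v. u \<in> SQ_carrier l \<longrightarrow> v \<in> SQ_carrier l \<longrightarrow>
        \<Phi> (\<lambda>j. sp_scale c (u j) + v j) = (\<lambda>j. sp_scale c (\<Phi> u j) + \<Phi> v j)) \<and>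
     (\<forall>F u. u \<in> SQ_carrier l \<longrightarrow>
        \<Phi> (SQ_act lam mu k p l F u) = SQ_act lam' mu' k' p' l' F (\<Phi> u))"

definition SQ_map_even :: "bit \<Rightarrow> nat \<Rightarrow> bit \<Rightarrow> ((nat \<Rightarrow> spoly) \<Rightarrow> (nat \<Rightarrow> spoly)) \<Rightarrow> bool" where
  "SQ_map_even p l p' \<Phi> \<longleftrightarrow>
     (\<forall>u \<in> SQ_carrier l. (SQ_is_even p u \<longrightarrow> SQ_is_even p' (\<Phi> u)) \<and>
                          (SQ_is_odd p u \<longrightarrow> SQ_is_odd p' (\<Phi> u)))"

definition SQ_map_odd :: "bit \<Rightarrow> nat \<Rightarrow> bit \<Rightarrow> ((nat \<Rightarrow> spoly) \<Rightarrow> (nat \<Rightarrow> spoly)) \<Rightarrow> bool" where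
  "SQ_map_odd p l p' \<Phi> \<longleftrightarrow>
     (\<forall>u \<in> SQ_carrier l. (SQ_is_even p u \<longrightarrow> SQ_is_odd p' (\<Phi> u)) \<and>
                          (SQ_is_odd p u \<longrightarrow> SQ_is_even p' (\<Phi> u)))"

end

theory Submission
  imports Defs
begin

text \<open>For an even field with affine coefficient f, the action on canonical representatives is
  coefficientwise: the j-th coefficient a + \<xi> b transforms as a pair of densities,
  a \<mapsto> f a' + (\<delta> - k + j/2) f' a and b \<mapsto> f b' + (\<delta> - k + (j+1)/2) f' b.
  So X_1 differentiates, and X_x is diagonal with eigenvalue \<delta> - k + (j+e)/2 + n on the monomial
  \<xi>^e x^n of the j-th coefficient. The eigenvalues of X_x on the kernel of X_1 are then exactly
  \<delta> - k + m/2 for 0 \<le> m \<le> l; an equivalence preserves this set, which forces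
  \<delta> - k = \<delta>' - k' and l = l'. Finally the eigenvalue determines the parity of j + e, and the
  sum of the eigenspaces of one parity class is cut out by a polynomial in X_x, hence preserved.
  The Z2-grading is this class shifted by p, so homogeneous elements are mapped to homogeneous
  elements, of the same parity iff p = p'.\<close>

lemma of_nat_bit: "(of_nat n :: bit) = (if even n then 0 else 1)"
  by (induction n) auto

lemma sp_scale_0 [simp]: "sp_scale c 0 = 0"
  by (simp add: sp_scale_def zero_prod_def)

lemma sp_mult_0_left [simp]: "sp_mult 0 G = 0"
  by (simp add: sp_mult_def zero_prod_def)

lemma sp_mult_0_right [simp]: "sp_mult G 0 = 0"
  by (simp add: sp_mult_def zero_prod_def)

lemma sp_Dbar_0 [simp]: "sp_Dbar 0 = 0"
  by (simp add: sp_Dbar_def zero_prod_def)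

lemma funpow_sp_dx_0 [simp]: "(sp_dx ^^ h) 0 = 0"
  by (induction h) (auto simp: sp_dx_def zero_prod_def)

lemma funpow_sp_dx_sigma: "(sp_dx ^^ h) (sp_sigma G) = sp_sigma ((sp_dx ^^ h) G)"
  by (induction h) (auto simp: sp_dx_def sp_sigma_def pderiv_minus)

lemma fst_sp_sigma [simp]: "fst (sp_sigma G) = fst G"
  by (simp add: sp_sigma_def)

lemma snd_sp_sigma [simp]: "snd (sp_sigma G) = - snd G"
  by (simp add: sp_sigma_def)

lemma funpow_sp_dx_eq_0_mono:
  assumes "(sp_dx ^^ a) G = 0" "a \<le> h"
  shows "(sp_dx ^^ h) G = 0"
proof -
  have "h = (h - a) + a" using assms(2) by simp
  then have "(sp_dx ^^ h) G = (sp_dx ^^ (h - a)) ((sp_dx ^^ a) G)"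
    by (metis funpow_add comp_apply)
  with assms(1) show ?thesis by simp
qed

lemma comm_coeff_0: "comm_coeff 0 z q G = (if q = 0 then G else sp_sigma G)"
  by (simp add: comm_coeff_def sp_scale_def prod_eq_iff)

lemma comm_coeff_1: "comm_coeff 1 z q G = (if q = 0 then 0 else sp_Dbar G)"
  by (simp add: comm_coeff_def sp_scale_def zero_prod_def)

lemma comm_coeff_2: "comm_coeff 2 z q G = (if q = 0 then sp_scale (-(z/2)) (sp_dx G)
     else sp_scale (-((z-1)/2)) (sp_dx (sp_sigma G)))"
proof -
  have "-((z-1)/2) = (1 - z)/(2::complex)" by (simp add: field_simps)
  then show ?thesis unfolding \<open>-((z-1)/2) = (1 - z)/2\<close> by (simp add: comm_coeff_def)
qed

lemma comm_coeff_eq_0_gchoose: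
  assumes "q = 0 \<Longrightarrow> even d \<Longrightarrow> (z/2) gchoose (d div 2) = 0"
    and "q \<noteq> 0 \<Longrightarrow> ((z-1)/2) gchoose (d div 2) = 0"
  shows "comm_coeff d z q G = 0"
  using assms by (auto simp: comm_coeff_def sp_scale_def zero_prod_def)

lemma comm_coeff_eq_0_dx:
  assumes "(sp_dx ^^ a) G = 0" "(sp_dx ^^ b) (sp_Dbar G) = 0"
    and "even d \<Longrightarrow> a \<le> d div 2" "odd d \<Longrightarrow> b \<le> d div 2"
  shows "comm_coeff d z q G = 0"
  using funpow_sp_dx_eq_0_mono[OF assms(1) assms(3)] funpow_sp_dx_eq_0_mono[OF assms(2) assms(4)]
  by (auto simp: comm_coeff_def sp_scale_def funpow_sp_dx_sigma prod_eq_iff)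

lemma comm_coeff_of_0 [simp]: "comm_coeff d z q 0 = 0"
  by (rule comm_coeff_eq_0_dx[where a = 0 and b = 0]) auto

lemma gbinomial_1_eq_0: "h \<ge> 2 \<Longrightarrow> (1::complex) gchoose h = 0"
  using binomial_gbinomial[of 1 h, where 'a=complex] by (simp add: binomial_eq_0)

lemma sum_triangle_eq_sum_support:
  fixes n :: nat
  assumes "S \<subseteq> Sigma {..n} (\<lambda>i. {..n-i})"
    and "\<And>i d. i + d \<le> n \<Longrightarrow> (i,d) \<notin> S \<Longrightarrow> f i d = 0"
  shows "(\<Sum>i\<le>n. \<Sum>d\<le>n-i. f i d) = (\<Sum>(i,d)\<in>S. f i d)"
proof -
  have "(\<Sum>i\<le>n. \<Sum>d\<le>n-i. f i d) = (\<Sum>(i,d)\<in>Sigma {..n} (\<lambda>i. {..n-i}). f i d)"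
    by (rule sum.Sigma) auto
  also have "\<dots> = (\<Sum>(i,d)\<in>S. f i d)"
    by (rule sum.mono_neutral_right) (use assms in auto)
  finally show ?thesis .
qed

text \<open>The Dbar-powers 2, 1, 0 of L have commutation coefficients built from 1 gchoose h and
  0 gchoose h, so only five terms of the composition survive, whatever f is.\<close>

lemma L_comp_coeff:
  "symb_coeff (symb_comp (L_symb mu (f,0)) (2*k, p, T)) (j+2) =
    sp_mult (-(f,0)) (T (j+2)) + sp_mult (-(f,0)) (sp_scale (-1) (sp_dx (T j)))
    + sp_mult (sp_scale (1/2) (sp_D (f,0))) (sp_sigma (T (j+1)))
    + sp_mult (sp_scale (1/2) (sp_D (f,0))) (sp_Dbar (T j))
    + sp_mult (sp_scale mu (sp_dx (f,0))) (T j)"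
  unfolding symb_coeff_def symb_comp_def L_symb_def
  apply (simp only: prod.case fst_conv snd_conv)
  apply (subst sum_triangle_eq_sum_support[where S="{(0,0),(0,2),(1,0),(1,1),(2,0)}"])
  subgoal by auto
  subgoal premises prems for i d
  proof (cases "i \<le> 2")
    case True
    then have "i = 0 \<or> i = 1 \<or> i = 2" by auto
    then have "comm_coeff d (2 - of_nat i) (0 + of_nat i) (T (j + 2 - i - d)) = 0"
      using prems by (elim disjE; intro comm_coeff_eq_0_gchoose)
        (auto simp: gbinomial_1_eq_0 gbinomial_0_left)
    then show ?thesis by simp
  qed simp
  by (simp add: comm_coeff_0 comm_coeff_1 comm_coeff_1[simplified] comm_coeff_2)

lemma comm_coeff_L_symb_eq_0:
  assumes f: "pderiv (pderiv f) = 0" and md: "3 \<le> m + d"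
  shows "comm_coeff d z q
       (if m = 0 then - (f,0) else if m = 1 then sp_scale (1/2) (sp_D (f,0))
        else if m = 2 then sp_scale nu (sp_dx (f,0)) else 0) = 0"
proof -
  consider "m = 0" | "m = 1" | "m = 2" | "m \<ge> 3" by linarith
  then show ?thesis
  proof cases
    case 1
    then have "even d \<Longrightarrow> 2 \<le> d div 2" "odd d \<Longrightarrow> 1 \<le> d div 2" using md by presburger+
    then show ?thesis
      by (intro comm_coeff_eq_0_dx[where a = 2 and b = 1])
        (use 1 f in \<open>auto simp: numeral_2_eq_2 sp_dx_def sp_Dbar_def pderiv_minus zero_prod_def\<close>)
  next
    case 2
    show ?thesis
      by (rule comm_coeff_eq_0_dx[where a = 1 and b = 1])
        (use 2 md f in \<open>auto simp: sp_dx_def sp_D_def sp_Dbar_def sp_scale_def pderiv_smult zero_prod_def\<close>)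
  next
    case 3
    show ?thesis
      by (rule comm_coeff_eq_0_dx[where a = 1 and b = 0])
        (use 3 md f in \<open>auto simp: sp_dx_def sp_Dbar_def sp_scale_def pderiv_smult zero_prod_def\<close>)
  qed simp
qed

lemma comp_L_coeff:
  assumes "pderiv (pderiv f) = 0"
  shows "symb_coeff (symb_comp (2*k, p, T) (L_symb nu (f,0))) (j+2) =
    sp_mult (T (j+2)) (comm_coeff 0 (2*k - of_nat (j+2)) (p + of_nat (j+2)) (-(f,0)))
  + sp_mult (T (j+1)) (comm_coeff 1 (2*k - of_nat (j+1)) (p + of_nat (j+1)) (-(f,0)))
  + sp_mult (T j) (comm_coeff 2 (2*k - of_nat j) (p + of_nat j) (-(f,0)))
  + sp_mult (T (j+1)) (comm_coeff 0 (2*k - of_nat (j+1)) (p + of_nat (j+1)) (sp_scale (1/2) (sp_D (f,0))))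
  + sp_mult (T j) (comm_coeff 1 (2*k - of_nat j) (p + of_nat j) (sp_scale (1/2) (sp_D (f,0))))
  + sp_mult (T j) (comm_coeff 0 (2*k - of_nat j) (p + of_nat j) (sp_scale nu (sp_dx (f,0))))"
  unfolding symb_coeff_def symb_comp_def L_symb_def
  apply (simp only: prod.case fst_conv snd_conv)
  apply (subst sum_triangle_eq_sum_support[where S="{(j+2,0),(j+1,1),(j,2),(j+1,0),(j,1),(j,0)}"])
  subgoal by auto
  subgoal premises prems for i d
  proof -
    have "3 \<le> (j + 2 - i - d) + d" using prems by auto
    then show ?thesis by (simp only: comm_coeff_L_symb_eq_0[OF assms] sp_mult_0_right)
  qed
  by simp

definition sp_density_action :: "complex poly \<Rightarrow> complex \<Rightarrow> nat \<Rightarrow> spoly \<Rightarrow> spoly" where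
  "sp_density_action f nu j G =
     (f * pderiv (fst G) + smult (nu + of_nat j / 2) (pderiv f * fst G),
      f * pderiv (snd G) + smult (nu + (of_nat j + 1) / 2) (pderiv f * snd G))"

lemma smult_half_double: "smult (1/2) (a * (2 * b)) = (a * b :: complex poly)"
proof -
  have "smult (1/2) (a * (2 * b)) = smult (1/2 + 1/2) (a * b)"
    by (simp only: mult_2 distrib_left smult_add_right smult_add_left)
  then show ?thesis by simp
qed

lemma hom_bracket_affine:
  assumes "pderiv (pderiv f) = 0"
  shows "hom_bracket lam mu k p (f, 0) False T to (j+2) = sp_density_action f (mu - lam - k) j (T j)"
proof -
  have "p + of_nat j = 0 \<or> p + of_nat j = (1::bit)" by (cases "p + of_nat j") auto
  moreover have "p + of_nat (j+1) = p + of_nat j + (1::bit)" by (simp add: add.assoc)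
  moreover have "p + of_nat (j+2) = p + (of_nat j::bit)" by (simp add: add.assoc)
  ultimately show ?thesis
    unfolding hom_bracket_def L_comp_coeff comp_L_coeff[OF assms] sp_density_action_def
    apply (elim disjE)
    apply (simp_all add: comm_coeff_0 comm_coeff_1 comm_coeff_1[simplified] comm_coeff_2 sp_mult_def
        sp_scale_def sp_D_def sp_Dbar_def sp_dx_def prod_eq_iff)
    apply (simp_all add: pderiv_minus algebra_simps smult_add_left smult_diff_left diff_divide_distrib
        add_divide_distrib smult_half_double)
    done
qed

lemma hom_bracket_zero_field: "hom_bracket lam mu k p (0,0) fo T to n = 0"
proof -
  have "L_symb nu (0,0) = (2, 0, \<lambda>n. 0)" for nu
    by (auto simp: L_symb_def sp_scale_def sp_D_def sp_dx_def zero_prod_def)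
  then show ?thesis
    by (simp add: hom_bracket_def symb_comp_def symb_coeff_def)
qed

lemma SQ_act_affine_even:
  assumes "pderiv (pderiv f) = 0"
  shows "SQ_act lam mu k p l (f,0) T =
    (\<lambda>j. if j < l then sp_density_action f (mu - lam - k) j (T j) else 0)"
proof
  fix j
  have parts: "sp_even_part (f,0) = (f,0)" "sp_odd_part (f,0) = (0,0)"
    by (simp_all add: sp_even_part_def sp_odd_part_def)
  show "SQ_act lam mu k p l (f,0) T j =
      (if j < l then sp_density_action f (mu - lam - k) j (T j) else 0)"
    unfolding SQ_act_def parts hom_bracket_zero_field hom_bracket_affine[OF assms]
    by (simp add: SQ_even_part_def SQ_odd_part_def sp_even_part_def sp_odd_part_def
        sp_density_action_def prod_eq_iff algebra_simps smult_add_right of_nat_bit)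
qed

definition sp_part :: "bool \<Rightarrow> spoly \<Rightarrow> complex poly" where
  "sp_part e G = (if e then snd G else fst G)"

definition SQ_coeff :: "(nat \<Rightarrow> spoly) \<Rightarrow> nat \<Rightarrow> bool \<Rightarrow> nat \<Rightarrow> complex" where
  "SQ_coeff u j e n = coeff (sp_part e (u j)) n"

definition euler_weight :: "complex \<Rightarrow> nat \<Rightarrow> bool \<Rightarrow> nat \<Rightarrow> complex" where
  "euler_weight nu j e n = nu + (of_nat j + of_bool e) / 2 + of_nat n"

definition euler_shift ::
  "complex \<Rightarrow> complex \<Rightarrow> complex \<Rightarrow> bit \<Rightarrow> nat \<Rightarrow> complex \<Rightarrow> (nat \<Rightarrow> spoly) \<Rightarrow> (nat \<Rightarrow> spoly)"
  where "euler_shift lam mu k p l c u = (\<lambda>j. sp_scale (- c) (u j) + SQ_act lam mu k p l ([:0,1:], 0) u j)"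

definition euler_shift_prod ::
  "complex \<Rightarrow> complex \<Rightarrow> complex \<Rightarrow> bit \<Rightarrow> nat \<Rightarrow> complex list \<Rightarrow> (nat \<Rightarrow> spoly) \<Rightarrow> (nat \<Rightarrow> spoly)"
  where "euler_shift_prod lam mu k p l cs u = foldr (euler_shift lam mu k p l) cs u"

lemma sp_eq_iff_coeff_sp_part: "G = H \<longleftrightarrow> (\<forall>e n. coeff (sp_part e G) n = coeff (sp_part e H) n)"
  by (metis poly_eq_iff prod_eq_iff sp_part_def)

lemma sp_part_zero [simp]: "sp_part e 0 = 0"
  by (simp add: sp_part_def)

lemma SQ_coeff_zero [simp]: "SQ_coeff (\<lambda>_. 0) j e n = 0"
  by (simp add: SQ_coeff_def)

lemma SQ_coeff_act_one:
  "SQ_coeff (SQ_act lam mu k p l (1,0) u) j e n = (if j < l then of_nat (Suc n) * SQ_coeff u j e (Suc n) else 0)"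
  by (auto simp: SQ_act_affine_even SQ_coeff_def sp_part_def sp_density_action_def coeff_pderiv algebra_simps)

lemma SQ_coeff_act_x:
  "SQ_coeff (SQ_act lam mu k p l ([:0,1:],0) u) j e n =
    (if j < l then euler_weight (mu - lam - k) j e n * SQ_coeff u j e n else 0)"
proof -
  have x_pderiv: "coeff (pCons 0 (pderiv a)) n = of_nat n * coeff (a::complex poly) n" for a
    by (cases n) (auto simp: coeff_pderiv)
  show ?thesis
    by (auto simp: SQ_act_affine_even pderiv_pCons SQ_coeff_def sp_part_def sp_density_action_def
        euler_weight_def x_pderiv algebra_simps)
qed

lemma SQ_coeff_euler_shift:
  "SQ_coeff (euler_shift lam mu k p l c u) j e n =
    (if j < l then (euler_weight (mu - lam - k) j e n - c) * SQ_coeff u j e n else - c * SQ_coeff u j e n)"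
  using SQ_coeff_act_x[of lam mu k p l u j e n]
  by (cases e) (auto simp: euler_shift_def SQ_coeff_def sp_part_def sp_scale_def algebra_simps)

lemma SQ_coeff_euler_shift_prod:
  "j < l \<Longrightarrow> SQ_coeff (euler_shift_prod lam mu k p l cs u) j e n =
     (\<Prod>c\<leftarrow>cs. euler_weight (mu - lam - k) j e n - c) * SQ_coeff u j e n"
  by (induction cs) (auto simp: euler_shift_prod_def SQ_coeff_euler_shift)

lemma SQ_act_in_carrier: "SQ_act lam mu k p l F u \<in> SQ_carrier l"
  by (simp add: SQ_act_def SQ_carrier_def)

lemma SQ_zero_in_carrier: "(\<lambda>_. 0) \<in> SQ_carrier l"
  by (simp add: SQ_carrier_def)

lemma SQ_carrier_eq_0: "u \<in> SQ_carrier l \<Longrightarrow> \<not> j < l \<Longrightarrow> u j = 0"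
  by (simp add: SQ_carrier_def)

lemma euler_shift_in_carrier: "u \<in> SQ_carrier l \<Longrightarrow> euler_shift lam mu k p l c u \<in> SQ_carrier l"
  using SQ_act_in_carrier[of lam mu k p l "([:0,1:],0)" u]
  by (simp add: euler_shift_def SQ_carrier_def)

lemma euler_shift_prod_in_carrier:
  "u \<in> SQ_carrier l \<Longrightarrow> euler_shift_prod lam mu k p l cs u \<in> SQ_carrier l"
  by (induction cs) (auto simp: euler_shift_prod_def euler_shift_in_carrier)

context
  fixes lam mu k p l lam' mu' k' p' l' \<Phi>
  assumes equiv: "SQ_equivalence lam mu k p l lam' mu' k' p' l' \<Phi>"
begin

lemma SQ_equivalence_bij: "bij_betw \<Phi> (SQ_carrier l) (SQ_carrier l')"
  using equiv by (simp add: SQ_equivalence_def)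

lemma SQ_equivalence_in_carrier: "u \<in> SQ_carrier l \<Longrightarrow> \<Phi> u \<in> SQ_carrier l'"
  using SQ_equivalence_bij by (auto simp: bij_betw_def)

lemma SQ_equivalence_linear:
  "u \<in> SQ_carrier l \<Longrightarrow> v \<in> SQ_carrier l \<Longrightarrow>
     \<Phi> (\<lambda>j. sp_scale c (u j) + v j) = (\<lambda>j. sp_scale c (\<Phi> u j) + \<Phi> v j)"
  using equiv unfolding SQ_equivalence_def by blast

lemma SQ_equivalence_act:
  "u \<in> SQ_carrier l \<Longrightarrow> \<Phi> (SQ_act lam mu k p l F u) = SQ_act lam' mu' k' p' l' F (\<Phi> u)"
  using equiv unfolding SQ_equivalence_def by blast

lemma SQ_equivalence_zero: "\<Phi> (\<lambda>_. 0) = (\<lambda>_. 0)"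
proof -
  have "sp_scale (-1) x + x = 0" for x by (simp add: sp_scale_def prod_eq_iff)
  then show ?thesis
    using SQ_equivalence_linear[OF SQ_zero_in_carrier SQ_zero_in_carrier, of "-1"] by simp
qed

lemma SQ_equivalence_eq_zero_iff: "u \<in> SQ_carrier l \<Longrightarrow> \<Phi> u = (\<lambda>_. 0) \<longleftrightarrow> u = (\<lambda>_. 0)"
  using SQ_equivalence_bij SQ_zero_in_carrier SQ_equivalence_zero
  unfolding bij_betw_def inj_on_def by metis

lemma SQ_equivalence_euler_shift:
  "u \<in> SQ_carrier l \<Longrightarrow> \<Phi> (euler_shift lam mu k p l c u) = euler_shift lam' mu' k' p' l' c (\<Phi> u)"
  unfolding euler_shift_def by (simp add: SQ_equivalence_linear SQ_act_in_carrier SQ_equivalence_act)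

lemma SQ_equivalence_euler_shift_prod:
  assumes "u \<in> SQ_carrier l"
  shows "\<Phi> (euler_shift_prod lam mu k p l cs u) = euler_shift_prod lam' mu' k' p' l' cs (\<Phi> u)"
proof (induction cs)
  case (Cons c cs)
  have "\<Phi> (euler_shift_prod lam mu k p l (c # cs) u) =
      \<Phi> (euler_shift lam mu k p l c (euler_shift_prod lam mu k p l cs u))"
    by (simp add: euler_shift_prod_def)
  also have "\<dots> = euler_shift lam' mu' k' p' l' c (\<Phi> (euler_shift_prod lam mu k p l cs u))"
    by (rule SQ_equivalence_euler_shift[OF euler_shift_prod_in_carrier[OF assms]])
  finally show ?case using Cons by (simp add: euler_shift_prod_def)
qed (simp add: euler_shift_prod_def)

lemma SQ_equivalence_inv: "SQ_equivalence lam' mu' k' p' l' lam mu k p l (inv_into (SQ_carrier l) \<Phi>)"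
proof -
  let ?\<Psi> = "inv_into (SQ_carrier l) \<Phi>"
  have bij: "bij_betw ?\<Psi> (SQ_carrier l') (SQ_carrier l)"
    by (rule bij_betw_inv_into[OF SQ_equivalence_bij])
  then have in_carrier: "?\<Psi> v \<in> SQ_carrier l" if "v \<in> SQ_carrier l'" for v
    using that by (auto simp: bij_betw_def)
  have left_inv: "?\<Psi> (\<Phi> u) = u" if "u \<in> SQ_carrier l" for u
    using SQ_equivalence_bij that by (simp add: bij_betw_def inv_into_f_f)
  have right_inv: "\<Phi> (?\<Psi> v) = v" if "v \<in> SQ_carrier l'" for v
    using SQ_equivalence_bij that by (simp add: bij_betw_inv_into_right)
  have "?\<Psi> (\<lambda>j. sp_scale c (u j) + v j) = (\<lambda>j. sp_scale c (?\<Psi> u j) + ?\<Psi> v j)"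
    if "u \<in> SQ_carrier l'" "v \<in> SQ_carrier l'" for c u v
  proof -
    have "\<Phi> (\<lambda>j. sp_scale c (?\<Psi> u j) + ?\<Psi> v j) = (\<lambda>j. sp_scale c (u j) + v j)"
      using SQ_equivalence_linear[OF in_carrier[OF that(1)] in_carrier[OF that(2)], of c]
        right_inv[OF that(1)] right_inv[OF that(2)] by simp
    then have "?\<Psi> (\<lambda>j. sp_scale c (u j) + v j) = ?\<Psi> (\<Phi> (\<lambda>j. sp_scale c (?\<Psi> u j) + ?\<Psi> v j))"
      by simp
    also have "\<dots> = (\<lambda>j. sp_scale c (?\<Psi> u j) + ?\<Psi> v j)"
      by (rule left_inv) (use in_carrier[OF that(1)] in_carrier[OF that(2)] in
          \<open>simp add: SQ_carrier_def\<close>)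
    finally show ?thesis .
  qed
  moreover have "?\<Psi> (SQ_act lam' mu' k' p' l' F v) = SQ_act lam mu k p l F (?\<Psi> v)"
    if "v \<in> SQ_carrier l'" for F v
  proof -
    have "\<Phi> (SQ_act lam mu k p l F (?\<Psi> v)) = SQ_act lam' mu' k' p' l' F v"
      using SQ_equivalence_act[OF in_carrier[OF that]] right_inv[OF that] by simp
    then have "?\<Psi> (SQ_act lam' mu' k' p' l' F v) = ?\<Psi> (\<Phi> (SQ_act lam mu k p l F (?\<Psi> v)))"
      by simp
    also have "\<dots> = SQ_act lam mu k p l F (?\<Psi> v)"
      by (rule left_inv[OF SQ_act_in_carrier])
    finally show ?thesis .
  qed
  ultimately show ?thesis
    unfolding SQ_equivalence_def using bij by blast
qed

end

definition SQ_kernel_eigenvalue :: "complex \<Rightarrow> complex \<Rightarrow> complex \<Rightarrow> bit \<Rightarrow> nat \<Rightarrow> complex \<Rightarrow> bool" where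
  "SQ_kernel_eigenvalue lam mu k p l c \<longleftrightarrow>
     (\<exists>u \<in> SQ_carrier l. u \<noteq> (\<lambda>_. 0) \<and> SQ_act lam mu k p l (1,0) u = (\<lambda>_. 0) \<and>
        euler_shift lam mu k p l c u = (\<lambda>_. 0))"

lemma SQ_kernel_eigenvalueD:
  assumes "SQ_kernel_eigenvalue lam mu k p l c"
  shows "\<exists>m \<le> l. c = mu - lam - k + of_nat m / 2"
proof -
  obtain u where u: "u \<in> SQ_carrier l" "u \<noteq> (\<lambda>_. 0)" "SQ_act lam mu k p l (1,0) u = (\<lambda>_. 0)"
    "euler_shift lam mu k p l c u = (\<lambda>_. 0)"
    using assms by (auto simp: SQ_kernel_eigenvalue_def)
  obtain j where "u j \<noteq> 0" using u(2) by auto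
  then obtain e n where nz: "SQ_coeff u j e n \<noteq> 0"
    using sp_eq_iff_coeff_sp_part[of "u j" 0] by (auto simp: SQ_coeff_def)
  have jl: "j < l" using SQ_carrier_eq_0[OF u(1)] \<open>u j \<noteq> 0\<close> by blast
  have "n = 0"
  proof (rule ccontr)
    assume "n \<noteq> 0"
    then obtain n' where "n = Suc n'" by (cases n) auto
    then have "of_nat (Suc n') * SQ_coeff u j e n = 0"
      using u(3) jl SQ_coeff_act_one[of lam mu k p l u j e n'] by simp
    with nz show False by (simp only: mult_eq_0_iff of_nat_eq_0_iff) simp
  qed
  moreover have "euler_weight (mu - lam - k) j e n = c"
    using u(4) nz jl SQ_coeff_euler_shift[of lam mu k p l c u j e n] by simp
  moreover have "j + of_bool e \<le> l" using jl by (cases e) auto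
  ultimately show ?thesis by (auto simp: euler_weight_def)
qed

text \<open>Witnesses: the constant 1 as m-th coefficient for m < l, and \<xi> as (l-1)-st coefficient
  for m = l.\<close>

lemma SQ_kernel_eigenvalueI:
  assumes "m \<le> l" "0 < l"
  shows "SQ_kernel_eigenvalue lam mu k p l (mu - lam - k + of_nat m / 2)"
proof (cases "m < l")
  case True
  let ?u = "\<lambda>i. if i = m then (1::complex poly, 0::complex poly) else 0"
  have "?u \<in> SQ_carrier l" using True by (simp add: SQ_carrier_def)
  moreover have "?u \<noteq> (\<lambda>_. 0)" by (metis fst_conv fst_zero one_neq_zero)
  moreover have "SQ_act lam mu k p l (1,0) ?u = (\<lambda>_. 0)"
    by (auto simp: SQ_act_affine_even sp_density_action_def zero_prod_def)
  moreover have "euler_shift lam mu k p l (mu - lam - k + of_nat m / 2) ?u = (\<lambda>_. 0)"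
    by (auto simp: euler_shift_def SQ_act_affine_even sp_density_action_def zero_prod_def
        sp_scale_def pderiv_pCons True)
  ultimately show ?thesis unfolding SQ_kernel_eigenvalue_def by blast
next
  case False
  with assms have "m = l" by simp
  let ?u = "\<lambda>i. if i = l - 1 then (0::complex poly, 1::complex poly) else 0"
  have "?u \<in> SQ_carrier l" using assms(2) by (auto simp: SQ_carrier_def)
  moreover have "?u \<noteq> (\<lambda>_. 0)" by (metis snd_conv snd_zero one_neq_zero)
  moreover have "SQ_act lam mu k p l (1,0) ?u = (\<lambda>_. 0)"
    by (auto simp: SQ_act_affine_even sp_density_action_def zero_prod_def)
  moreover have "euler_shift lam mu k p l (mu - lam - k + of_nat m / 2) ?u = (\<lambda>_. 0)"
  proof -
    have "of_nat (l - 1) + 1 = (of_nat l :: complex)" using assms(2) by (simp add: of_nat_diff)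
    then show ?thesis
      using assms(2) by (auto simp: euler_shift_def SQ_act_affine_even sp_density_action_def
          zero_prod_def sp_scale_def pderiv_pCons \<open>m = l\<close>)
  qed
  ultimately show ?thesis unfolding SQ_kernel_eigenvalue_def by blast
qed

lemma SQ_equivalence_kernel_eigenvalue:
  assumes equiv: "SQ_equivalence lam mu k p l lam' mu' k' p' l' \<Phi>"
    and "SQ_kernel_eigenvalue lam mu k p l c"
  shows "SQ_kernel_eigenvalue lam' mu' k' p' l' c"
proof -
  obtain u where u: "u \<in> SQ_carrier l" "u \<noteq> (\<lambda>_. 0)" "SQ_act lam mu k p l (1,0) u = (\<lambda>_. 0)"
    "euler_shift lam mu k p l c u = (\<lambda>_. 0)"
    using assms(2) by (auto simp: SQ_kernel_eigenvalue_def)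
  have "SQ_act lam' mu' k' p' l' (1,0) (\<Phi> u) = (\<lambda>_. 0)"
    using SQ_equivalence_act[OF equiv u(1), of "(1,0)"] u(3) SQ_equivalence_zero[OF equiv] by simp
  moreover have "euler_shift lam' mu' k' p' l' c (\<Phi> u) = (\<lambda>_. 0)"
    using SQ_equivalence_euler_shift[OF equiv u(1), of c] u(4) SQ_equivalence_zero[OF equiv] by simp
  moreover have "\<Phi> u \<noteq> (\<lambda>_. 0)" using SQ_equivalence_eq_zero_iff[OF equiv u(1)] u(2) by simp
  ultimately show ?thesis
    unfolding SQ_kernel_eigenvalue_def using SQ_equivalence_in_carrier[OF equiv u(1)] by blast
qed

lemma half_integer_ranges_eq:
  fixes a b :: complex
  assumes "\<forall>m \<le> l. \<exists>m' \<le> l'. a + of_nat m / 2 = b + of_nat m' / 2"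
    and "\<forall>m' \<le> l'. \<exists>m \<le> l. b + of_nat m' / 2 = a + of_nat m / 2"
  shows "a = b \<and> l = l'"
proof -
  obtain m1 where "a = b + of_nat m1 / 2" using assms(1)[rule_format, of 0] by auto
  moreover obtain m2 where "b = a + of_nat m2 / 2" using assms(2)[rule_format, of 0] by auto
  ultimately have "(of_nat (m1 + m2) :: complex) = 0" by (simp add: field_simps)
  then have "m1 + m2 = 0" by (simp only: of_nat_eq_0_iff)
  then have "m1 = 0" by simp
  with \<open>a = b + of_nat m1 / 2\<close> have ab: "a = b" by simp
  obtain m3 m4 where "m3 \<le> l'" "a + of_nat l / 2 = b + of_nat m3 / 2"
    "m4 \<le> l" "b + of_nat l' / 2 = a + of_nat m4 / 2"
    using assms(1)[rule_format, of l] assms(2)[rule_format, of l'] by auto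
  with ab have "l \<le> l'" "l' \<le> l" by simp_all
  with ab show ?thesis by simp
qed

lemma SQ_equivalence_weight_length:
  assumes equiv: "SQ_equivalence lam mu k p l lam' mu' k' p' l' \<Phi>" and "0 < l" "0 < l'"
  shows "mu - lam - k = mu' - lam' - k' \<and> l = l'"
proof (rule half_integer_ranges_eq; intro allI impI)
  fix m assume "m \<le> l"
  then have "SQ_kernel_eigenvalue lam' mu' k' p' l' (mu - lam - k + of_nat m / 2)"
    by (intro SQ_equivalence_kernel_eigenvalue[OF equiv] SQ_kernel_eigenvalueI assms(2))
  then show "\<exists>m' \<le> l'. mu - lam - k + of_nat m / 2 = mu' - lam' - k' + of_nat m' / 2"
    by (rule SQ_kernel_eigenvalueD)
next
  fix m' assume "m' \<le> l'"
  then have "SQ_kernel_eigenvalue lam mu k p l (mu' - lam' - k' + of_nat m' / 2)"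
    by (intro SQ_equivalence_kernel_eigenvalue[OF SQ_equivalence_inv[OF equiv]]
        SQ_kernel_eigenvalueI assms(3))
  then show "\<exists>m \<le> l. mu' - lam' - k' + of_nat m' / 2 = mu - lam - k + of_nat m / 2"
    by (rule SQ_kernel_eigenvalueD)
qed

definition SQ_parity_class :: "bool \<Rightarrow> (nat \<Rightarrow> spoly) \<Rightarrow> bool" where
  "SQ_parity_class b u \<longleftrightarrow> (\<forall>j e n. SQ_coeff u j e n \<noteq> 0 \<longrightarrow> even (j + of_bool e) = b)"

lemma euler_weight_eq_imp_parity_eq:
  assumes "euler_weight nu j' e' n' = euler_weight nu j e n"
  shows "even (j' + of_bool e') = even (j + of_bool e)"
proof -
  have "2 * euler_weight nu j e n = 2 * nu + of_nat (j + of_bool e + 2 * n)" for j e n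
    by (cases e) (simp_all add: euler_weight_def field_simps)
  from this[of j' e' n'] this[of j e n] assms
  have "of_nat (j' + of_bool e' + 2 * n') = (of_nat (j + of_bool e + 2 * n) :: complex)"
    by simp
  then have "j' + of_bool e' + 2 * n' = j + of_bool e + 2 * n" by (simp only: of_nat_eq_iff)
  then have "even (j' + of_bool e' + 2 * n') = even (j + of_bool e + 2 * n)" by simp
  then show ?thesis by simp
qed

lemma SQ_parity_class_annihilator:
  assumes u: "u \<in> SQ_carrier l" and "SQ_parity_class b u"
  obtains cs where "\<forall>c \<in> set cs. \<exists>j e n. c = euler_weight (mu - lam - k) j e n \<and> even (j + of_bool e) = b"
    and "euler_shift_prod lam mu k p l cs u = (\<lambda>_. 0)"
proof -
  define S where "S = {(j, e, n). j < l \<and> n \<le> degree (sp_part e (u j)) \<and> even (j + of_bool e) = b}"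
  have "S \<subseteq> Sigma {..<l} (\<lambda>j. Sigma UNIV (\<lambda>e. {..degree (sp_part e (u j))}))"
    by (clarsimp simp: S_def)
  then have "finite S" by (rule finite_subset) (intro finite_SigmaI; simp)
  then have "finite ((\<lambda>(j, e, n). euler_weight (mu - lam - k) j e n) ` S)" by (rule finite_imageI)
  from finite_list[OF this] obtain cs
    where cs: "set cs = (\<lambda>(j, e, n). euler_weight (mu - lam - k) j e n) ` S" ..
  have "euler_shift_prod lam mu k p l cs u = (\<lambda>_. 0)"
  proof
    fix j
    show "euler_shift_prod lam mu k p l cs u j = 0"
    proof (cases "j < l")
      case True
      have "SQ_coeff (euler_shift_prod lam mu k p l cs u) j e n = 0" for e n
      proof (cases "SQ_coeff u j e n = 0")
        case False
        then have "even (j + of_bool e) = b"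
          using assms(2) unfolding SQ_parity_class_def by blast
        moreover have "n \<le> degree (sp_part e (u j))"
          using False by (simp add: SQ_coeff_def le_degree)
        ultimately have "(j, e, n) \<in> S" using True by (simp add: S_def)
        then have "euler_weight (mu - lam - k) j e n \<in> set cs"
          unfolding cs by (rule rev_image_eqI) simp
        with True show ?thesis by (simp add: SQ_coeff_euler_shift_prod prod_list_zero_iff)
      qed (simp add: True SQ_coeff_euler_shift_prod)
      then show ?thesis by (simp add: sp_eq_iff_coeff_sp_part SQ_coeff_def)
    qed (rule SQ_carrier_eq_0[OF euler_shift_prod_in_carrier[OF u]])
  qed
  moreover have "\<forall>c \<in> set cs. \<exists>j e n. c = euler_weight (mu - lam - k) j e n \<and> even (j + of_bool e) = b"
    unfolding cs S_def by (simp add: image_iff) blast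
  ultimately show ?thesis by (rule that[rotated])
qed

lemma SQ_parity_class_if_annihilated:
  assumes "v \<in> SQ_carrier l"
    and "\<forall>c \<in> set cs. \<exists>j e n. c = euler_weight (mu - lam - k) j e n \<and> even (j + of_bool e) = b"
    and "euler_shift_prod lam mu k p l cs v = (\<lambda>_. 0)"
  shows "SQ_parity_class b v"
  unfolding SQ_parity_class_def
proof (intro allI impI)
  fix j e n assume nz: "SQ_coeff v j e n \<noteq> 0"
  have "j < l"
  proof (rule ccontr)
    assume "\<not> j < l"
    then have "v j = 0" by (rule SQ_carrier_eq_0[OF assms(1)])
    with nz show False by (simp add: SQ_coeff_def)
  qed
  have "(\<Prod>c\<leftarrow>cs. euler_weight (mu - lam - k) j e n - c) * SQ_coeff v j e n = 0"
    using SQ_coeff_euler_shift_prod[OF \<open>j < l\<close>, of lam mu k p cs v e n] assms(3) by simp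
  with nz obtain c where c: "c \<in> set cs" "euler_weight (mu - lam - k) j e n = c"
    by (auto simp: prod_list_zero_iff)
  from bspec[OF assms(2) c(1)] obtain j' e' n' where
    "c = euler_weight (mu - lam - k) j' e' n'" "even (j' + of_bool e') = b"
    by blast
  with c(2) show "even (j + of_bool e) = b"
    using euler_weight_eq_imp_parity_eq[of "mu - lam - k" j' e' n' j e n] by simp
qed

lemma SQ_equivalence_parity_class:
  assumes equiv: "SQ_equivalence lam mu k p l lam' mu' k' p' l' \<Phi>"
    and nu: "mu - lam - k = mu' - lam' - k'"
    and u: "u \<in> SQ_carrier l" and "SQ_parity_class b u"
  shows "SQ_parity_class b (\<Phi> u)"
proof -
  obtain cs where cs: "\<forall>c \<in> set cs. \<exists>j e n. c = euler_weight (mu - lam - k) j e n \<and> even (j + of_bool e) = b"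
    and "euler_shift_prod lam mu k p l cs u = (\<lambda>_. 0)"
    using SQ_parity_class_annihilator[OF u assms(4)] by blast
  then have "euler_shift_prod lam' mu' k' p' l' cs (\<Phi> u) = (\<lambda>_. 0)"
    using SQ_equivalence_euler_shift_prod[OF equiv u, of cs] SQ_equivalence_zero[OF equiv] by simp
  with cs nu show ?thesis
    by (intro SQ_parity_class_if_annihilated[OF SQ_equivalence_in_carrier[OF equiv u]]) simp_all
qed

lemma bit_eq_0_or_1: "(b::bit) = 0 \<or> b = 1"
  by (cases b) auto

lemma SQ_is_even_iff_parity_class: "SQ_is_even p u \<longleftrightarrow> SQ_parity_class (p = 0) u"
proof -
  have "SQ_is_even p u \<longleftrightarrow> (\<forall>j. if (p = 0) = even j then snd (u j) = 0 else fst (u j) = 0)"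
    unfolding SQ_is_even_def SQ_odd_part_def using bit_eq_0_or_1[of p]
    by (auto simp: fun_eq_iff sp_even_part_def sp_odd_part_def of_nat_bit zero_prod_def split: if_splits)
  also have "\<dots> \<longleftrightarrow> SQ_parity_class (p = 0) u"
    unfolding SQ_parity_class_def SQ_coeff_def sp_part_def by (auto simp: poly_eq_iff split: if_splits)
  finally show ?thesis .
qed

lemma SQ_is_odd_iff_parity_class: "SQ_is_odd p u \<longleftrightarrow> SQ_parity_class (p \<noteq> 0) u"
proof -
  have "SQ_is_odd p u \<longleftrightarrow> (\<forall>j. if (p = 0) = even j then fst (u j) = 0 else snd (u j) = 0)"
    unfolding SQ_is_odd_def SQ_even_part_def using bit_eq_0_or_1[of p]
    by (auto simp: fun_eq_iff sp_even_part_def sp_odd_part_def of_nat_bit zero_prod_def split: if_splits)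
  also have "\<dots> \<longleftrightarrow> SQ_parity_class (p \<noteq> 0) u"
    unfolding SQ_parity_class_def SQ_coeff_def sp_part_def
    by (auto simp: poly_eq_iff split: if_splits) (metis (full_types))+
  finally show ?thesis .
qed

theorem lemma2p3:
  fixes lam mu lam' mu' k k' :: complex and p p' :: bit and l l' :: nat
    and \<Phi> :: "(nat \<Rightarrow> spoly) \<Rightarrow> (nat \<Rightarrow> spoly)"
  assumes "l > 0" and "l' > 0"
    and "SQ_equivalence lam mu k p l lam' mu' k' p' l' \<Phi>"
  shows "l = l' \<and> (mu - lam) - k = (mu' - lam') - k' \<and>
         (p = p' \<longrightarrow> SQ_map_even p l p' \<Phi>) \<and>
         (p \<noteq> p' \<longrightarrow> SQ_map_odd p l p' \<Phi>)"
proof -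
  note equiv = assms(3)
  have weight_length: "mu - lam - k = mu' - lam' - k' \<and> l = l'"
    using SQ_equivalence_weight_length[OF equiv assms(1,2)] .
  have parity: "SQ_parity_class b (\<Phi> u)" if "u \<in> SQ_carrier l" "SQ_parity_class b u" for b u
    using SQ_equivalence_parity_class[OF equiv _ that] weight_length by simp
  have "p = p' \<longrightarrow> SQ_map_even p l p' \<Phi>"
    unfolding SQ_map_even_def SQ_is_even_iff_parity_class SQ_is_odd_iff_parity_class
    using parity by blast
  moreover have "p \<noteq> p' \<longrightarrow> SQ_map_odd p l p' \<Phi>"
  proof
    assume "p \<noteq> p'"
    then have "(p' = 0) = (p \<noteq> 0)" "(p' \<noteq> 0) = (p = 0)"
      using bit_eq_0_or_1[of p] bit_eq_0_or_1[of p'] by auto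
    then show "SQ_map_odd p l p' \<Phi>"
      unfolding SQ_map_odd_def SQ_is_even_iff_parity_class SQ_is_odd_iff_parity_class
      using parity by simp
  qed
  ultimately show ?thesis using weight_length by blast
qed

end
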